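(* Suppose $R=0$ and $f$ satisfies the Polyak–Łojasiewicz condition with constant $\mu>0$: $\|\nabla f(x)\|^2\ge2\mu(f(x)-f^\star)$ for all $x$, with $f^\star=f(x^\star)$ for a minimizer $x^\star$ of $f$. In DIANA (i.e., EF-BV with $\nu=1$) with compressors in $\mathbb{C}(\eta,\omega)$, suppose $\lambda\in(0,1]$ is such that $r<1$, and $$0<\gamma\le\frac{1}{L+\tilde L\sqrt{\frac{r_{\mathrm{av}}}{r}}\frac1{s^\star}}.$$ For $t\ge0$ let $\Psi^t=f(x^t)-f^\star+\frac{\gamma}{2\theta^\star}\frac1n\sum_{i=1}^n\|\nabla f_i(x^t)-h_i^t\|^2$. Then for every $t\ge0$, $\mathbb{E}[\Psi^t]\le\big(\max(1-\gamma\mu,\frac{r+1}{2})\big)^t\Psi^0$.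
   Context: $f=\frac1n\sum_if_i$, each $f_i:\mathbb{R}^d\to\mathbb{R}$ convex and $L_i$-smooth; $\tilde L=\sqrt{\frac1n\sum_iL_i^2}$; $f$ is $L$-smooth with $L\le\tilde L$. For $\eta\in[0,1)$, $\omega\ge0$, $\mathbb{C}(\eta,\omega)$ is the class of randomized operators $\mathcal{C}:\mathbb{R}^d\to\mathbb{R}^d$ with $\|\mathbb{E}[\mathcal{C}(x)]-x\|\le\eta\|x\|$ and $\mathbb{E}\|\mathcal{C}(x)-\mathbb{E}[\mathcal{C}(x)]\|^2\le\omega\|x\|^2$ for all $x$. Compressors $\mathcal{C}_i^t$ all lie in $\mathbb{C}(\eta,\omega)$, those at iteration $t$ are independent of previous randomness, and $\omega_{\mathrm{av}}\in[0,\omega]$ satisfies $\mathbb{E}\|\frac1n\sum_i(\mathcal{C}_i^t(x_i)-\mathbb{E}[\mathcal{C}_i^t(x_i)])\|^2\le\frac{\omega_{\mathrm{av}}}{n}\sum_i\|x_i\|^2$ for all $t$ and $x_1,\dots,x_n$. DIANA: given $x^0,h_1^0,\dots,h_n^0$, $\gamma>0$, $\lambda\in(0,1]$, $h^0=\frac1n\sum_ih_i^0$; for $t\ge0$: $d_i^t=\mathcal{C}_i^t(\nabla f_i(x^t)-h_i^t)$, $h_i^{t+1}=h_i^t+\lambda d_i^t$, $d^t=\frac1n\sum_id_i^t$, $h^{t+1}=h^t+\lambda d^t$, $g^{t+1}=h^t+d^t$, $x^{t+1}=x^t-\gamma g^{t+1}$ (here $R=0$). Constants: $r=(1-\lambda+\lambda\eta)^2+\lambda^2\omega$,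 $r_{\mathrm{av}}=\eta^2+\omega_{\mathrm{av}}$, $s^\star=\sqrt{\frac{1+r}{2r}}-1$, $\theta^\star=s^\star(1+s^\star)\frac{r}{r_{\mathrm{av}}}$ (with $r>0$, $r_{\mathrm{av}}>0$). *)

theory Defs
  imports "HOL-Probability.Probability"
begin

text \<open>State of DIANA at iteration t: (x^t, (h_i^t)_i, h^t). The randomness used
 at iteration t is the sample w t; the compressor C_i^t is the operator
 Cop t i applied with that sample.\<close>

fun diana ::
  "nat \<Rightarrow> (nat \<Rightarrow> 'a::real_normed_vector \<Rightarrow> 'a) \<Rightarrow> (nat \<Rightarrow> nat \<Rightarrow> 'a \<Rightarrow> 'w \<Rightarrow> 'a)
   \<Rightarrow> real \<Rightarrow> real \<Rightarrow> 'a \<Rightarrow> (nat \<Rightarrow> 'a) \<Rightarrow> (nat \<Rightarrow> 'w) \<Rightarrow> nat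
   \<Rightarrow> 'a \<times> (nat \<Rightarrow> 'a) \<times> 'a" where
  "diana n gf Cop lam gam x0 h0 w 0 = (x0, h0, (1 / real n) *\<^sub>R (\<Sum>i<n. h0 i))"
| "diana n gf Cop lam gam x0 h0 w (Suc t) =
     (let (x, hs, hb) = diana n gf Cop lam gam x0 h0 w t;
          d = (\<lambda>i. Cop t i (gf i x - hs i) (w t));
          dbar = (1 / real n) *\<^sub>R (\<Sum>i<n. d i);
          g = hb + dbar
      in (x - gam *\<^sub>R g, (\<lambda>i. hs i + lam *\<^sub>R d i), hb + lam *\<^sub>R dbar))"

definition compressor_class ::
  "'m measure \<Rightarrow> ('a::euclidean_space \<Rightarrow> 'm \<Rightarrow> 'a) \<Rightarrow> real \<Rightarrow> real \<Rightarrow> bool" where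
  "compressor_class M Cx eta om \<longleftrightarrow>
     (\<forall>x. integrable M (Cx x) \<and>
          norm ((\<integral>v. Cx x v \<partial>M) - x) \<le> eta * norm x \<and>
          (\<integral>\<^sup>+ v. ennreal ((norm (Cx x v - (\<integral>u. Cx x u \<partial>M)))\<^sup>2) \<partial>M)
             \<le> ennreal (om * (norm x)\<^sup>2))"

definition s_star :: "real \<Rightarrow> real" where
  "s_star r = sqrt ((1 + r) / (2 * r)) - 1"

definition theta_star :: "real \<Rightarrow> real \<Rightarrow> real" where
  "theta_star r r_av = s_star r * (1 + s_star r) * r / r_av"

definition lyap ::
  "nat \<Rightarrow> ('a::real_normed_vector \<Rightarrow> real) \<Rightarrow> (nat \<Rightarrow> 'a \<Rightarrow> 'a) \<Rightarrow> real \<Rightarrow> real \<Rightarrow> real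
   \<Rightarrow> 'a \<times> (nat \<Rightarrow> 'a) \<times> 'a \<Rightarrow> real" where
  "lyap n f gf fstar gam theta st =
     f (fst st) - fstar
     + gam / (2 * theta) * ((1 / real n) * (\<Sum>i<n. (norm (gf i (fst st) - fst (snd st) i))\<^sup>2))"

end

theory Submission
  imports Defs
begin

text \<open>The Lyapunov function \<open>\<Psi> = f x - f\<^sup>\<star> + \<gamma>/(2\<theta>) \<cdot> (1/n) \<Sum>\<^sub>i \<parallel>\<nabla>f\<^sub>i x - h\<^sub>i\<parallel>\<^sup>2\<close> contracts in
  expectation at every step, for every fixed current state. The descent lemma applied to the
  compressed gradient \<open>g\<close> yields the decrease \<open>-\<gamma>/2 \<parallel>\<nabla>f x\<parallel>\<^sup>2\<close>, which the PL inequality turns into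
  \<open>-\<gamma>\<mu>(f x - f\<^sup>\<star>)\<close>, at the price of the averaged compression error, of second moment at most
  \<open>r\<^sub>a\<^sub>v \<cdot> (1/n) \<Sum>\<^sub>i \<parallel>\<nabla>f\<^sub>i x - h\<^sub>i\<parallel>\<^sup>2\<close>. Young's inequality with parameter \<open>s\<close> bounds the new
  control-variate errors by \<open>(1 + s) r\<close> times the old ones plus a multiple of \<open>\<parallel>g\<parallel>\<^sup>2\<close>, and the step
  size condition makes that multiple cancel against the \<open>\<parallel>g\<parallel>\<^sup>2\<close> term of the descent lemma. With
  \<open>s = s\<^sup>\<star>\<close> and \<open>\<theta> = \<theta>\<^sup>\<star>\<close> the two error terms combine to exactly \<open>(1 + s\<^sup>\<star>)\<^sup>2 r = (1 + r)/2\<close>.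
  Since the compressor randomness of iteration \<open>t\<close> is independent of the past, conditioning on
  the first \<open>t\<close> samples turns the one-step bound into a bound on the expectation.\<close>

section \<open>Inequalities for smooth functions\<close>

lemma norm_add_power2_le:
  fixes a b :: "'a::real_inner"
  assumes s: "s > 0"
  shows "(norm (a + b))\<^sup>2 \<le> (1 + s) * (norm a)\<^sup>2 + (1 + 1 / s) * (norm b)\<^sup>2"
proof -
  have "2 * (norm a * norm b) \<le> s * (norm a)\<^sup>2 + (norm b)\<^sup>2 / s"
  proof -
    have "0 \<le> (s * norm a - norm b)\<^sup>2 / s" using s by simp
    then show ?thesis using s by (simp add: power2_eq_square field_simps)
  qed
  moreover have "(norm (a + b))\<^sup>2 = (norm a)\<^sup>2 + 2 * (a \<bullet> b) + (norm b)\<^sup>2"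
    by (simp add: power2_norm_eq_inner inner_add inner_commute)
  moreover have "a \<bullet> b \<le> norm a * norm b" by (rule norm_cauchy_schwarz)
  ultimately show ?thesis by (simp add: algebra_simps)
qed

lemma norm_control_variate_update_le:
  fixes G :: "'a::real_normed_vector \<Rightarrow> 'b::real_inner"
  assumes s: "s > 0" and lip: "norm (G x' - G x) \<le> K * norm (x' - x)"
  shows "(norm (G x' - (h + d)))\<^sup>2 \<le> (1 + s) * (norm (d - (G x - h)))\<^sup>2 + (1 + 1 / s) * (K\<^sup>2 * (norm (x' - x))\<^sup>2)"
proof -
  have "G x' - (h + d) = ((G x - h) - d) + (G x' - G x)" by simp
  then have "(norm (G x' - (h + d)))\<^sup>2 \<le> (1 + s) * (norm ((G x - h) - d))\<^sup>2 + (1 + 1 / s) * (norm (G x' - G x))\<^sup>2"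
    by (metis norm_add_power2_le[OF s])
  moreover have "(norm (G x' - G x))\<^sup>2 \<le> K\<^sup>2 * (norm (x' - x))\<^sup>2"
    using lip by (metis norm_ge_zero power_mono power_mult_distrib)
  then have "(1 + 1 / s) * (norm (G x' - G x))\<^sup>2 \<le> (1 + 1 / s) * (K\<^sup>2 * (norm (x' - x))\<^sup>2)"
    using s by (intro mult_left_mono) auto
  ultimately show ?thesis by (simp add: norm_minus_commute)
qed

lemma descent_lemma:
  fixes F :: "'a::real_inner \<Rightarrow> real"
  assumes deriv: "\<And>x. (F has_derivative (\<lambda>h. G x \<bullet> h)) (at x)"
    and lip: "\<And>x y. norm (G x - G y) \<le> L * norm (x - y)"
  shows "F y \<le> F x + G x \<bullet> (y - x) + L / 2 * (norm (y - x))\<^sup>2"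
proof -
  define d where "d = y - x"
  define \<psi> where "\<psi> = (\<lambda>\<tau>::real. F (x + \<tau> *\<^sub>R d) - \<tau> * (G x \<bullet> d) - L / 2 * \<tau>\<^sup>2 * (norm d)\<^sup>2)"
  have "\<psi> 1 \<le> \<psi> 0"
  proof (rule DERIV_nonpos_imp_nonincreasing[of 0 1 \<psi>])
    fix \<tau> :: real assume \<tau>: "0 \<le> \<tau>" "\<tau> \<le> 1"
    have "((\<lambda>\<tau>. x + \<tau> *\<^sub>R d) has_derivative (\<lambda>h. h *\<^sub>R d)) (at \<tau>)"
      by (auto intro!: derivative_eq_intros)
    from has_derivative_compose[OF this deriv]
    have "((\<lambda>\<tau>. F (x + \<tau> *\<^sub>R d)) has_real_derivative (G (x + \<tau> *\<^sub>R d) \<bullet> d)) (at \<tau>)"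
      by (simp add: has_field_derivative_def o_def mult_commute_abs)
    then have D: "(\<psi> has_real_derivative (G (x + \<tau> *\<^sub>R d) \<bullet> d - G x \<bullet> d - L / 2 * (2 * \<tau>) * (norm d)\<^sup>2)) (at \<tau>)"
      unfolding \<psi>_def by (auto intro!: derivative_eq_intros)
    have "(G (x + \<tau> *\<^sub>R d) - G x) \<bullet> d \<le> norm (G (x + \<tau> *\<^sub>R d) - G x) * norm d"
      by (rule norm_cauchy_schwarz)
    also have "\<dots> \<le> (L * norm (\<tau> *\<^sub>R d)) * norm d"
      using lip[of "x + \<tau> *\<^sub>R d" x] by (intro mult_right_mono) auto
    also have "\<dots> = L * \<tau> * (norm d)\<^sup>2" using \<tau> by (simp add: power2_eq_square)
    finally have "G (x + \<tau> *\<^sub>R d) \<bullet> d - G x \<bullet> d - L / 2 * (2 * \<tau>) * (norm d)\<^sup>2 \<le> 0"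
      by (simp add: inner_diff_left)
    with D show "\<exists>y. DERIV \<psi> \<tau> :> y \<and> y \<le> 0" by blast
  qed simp
  then show ?thesis unfolding \<psi>_def d_def by (simp add: algebra_simps)
qed

lemma gradient_step_le:
  fixes F :: "'a::real_inner \<Rightarrow> real"
  assumes "\<And>x. (F has_derivative (\<lambda>h. G x \<bullet> h)) (at x)"
    and "\<And>x y. norm (G x - G y) \<le> L * norm (x - y)"
  shows "F (x - gam *\<^sub>R g) \<le> F x - gam / 2 * (norm (G x))\<^sup>2
           - gam / 2 * (1 - gam * L) * (norm g)\<^sup>2 + gam / 2 * (norm (g - G x))\<^sup>2"
proof -
  have polar: "(norm (g - G x))\<^sup>2 = (norm g)\<^sup>2 - 2 * (G x \<bullet> g) + (norm (G x))\<^sup>2"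
    by (simp add: power2_norm_eq_inner inner_diff inner_commute)
  have "F (x - gam *\<^sub>R g) \<le> F x - gam * (G x \<bullet> g) + L / 2 * gam\<^sup>2 * (norm g)\<^sup>2"
    using descent_lemma[OF assms, of "x - gam *\<^sub>R g" x] by (simp add: power_mult_distrib)
  also have "\<dots> = F x - gam / 2 * (norm (G x))\<^sup>2
           - gam / 2 * (1 - gam * L) * (norm g)\<^sup>2 + gam / 2 * (norm (g - G x))\<^sup>2"
    unfolding polar by (simp add: field_simps power2_eq_square)
  finally show ?thesis .
qed

lemma has_derivative_average:
  fixes fi :: "nat \<Rightarrow> 'a::real_inner \<Rightarrow> real"
  assumes "\<And>i. i < n \<Longrightarrow> (fi i has_derivative (\<lambda>h. gf i x \<bullet> h)) (at x)"
  shows "((\<lambda>x. (1 / real n) * (\<Sum>i<n. fi i x)) has_derivative (\<lambda>h. ((1 / real n) *\<^sub>R (\<Sum>i<n. gf i x)) \<bullet> h)) (at x)"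
proof -
  have "((\<lambda>x. (1 / real n) * (\<Sum>i<n. fi i x)) has_derivative (\<lambda>h. (1 / real n) * (\<Sum>i<n. gf i x \<bullet> h))) (at x)"
    using assms by (intro has_derivative_mult_right has_derivative_sum) auto
  then show ?thesis by (simp add: inner_sum_left)
qed

lemma stepsize_le_inverse_sum:
  fixes gam L a :: real
  assumes gam: "0 < gam" and L: "0 \<le> L" and a: "0 \<le> a" and le: "gam \<le> 1 / (L + a)"
  shows "gam * L + (gam * a)\<^sup>2 \<le> 1"
proof -
  have "0 < L + a" using le gam by (cases "L + a = 0") (use L a in auto)
  then have "gam * a \<le> 1 - gam * L" using le by (simp add: field_simps)
  moreover have "0 \<le> gam * a" "0 \<le> gam * L" using gam L a by auto
  ultimately have "(gam * a)\<^sup>2 \<le> (1 - gam * L)\<^sup>2" by (intro power_mono)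
  also have "\<dots> \<le> 1 - gam * L"
    using \<open>0 \<le> gam * a\<close> \<open>gam * a \<le> 1 - gam * L\<close> \<open>0 \<le> gam * L\<close>
    by (simp add: power2_eq_square mult_left_le)
  finally show ?thesis by simp
qed

lemma lipschitz_bound_nonneg:
  fixes g :: "'a::euclidean_space \<Rightarrow> 'b::real_normed_vector"
  assumes "\<And>x y. norm (g x - g y) \<le> K * norm (x - y)"
  shows "0 \<le> K"
proof -
  obtain b :: 'a where "b \<in> Basis" using nonempty_Basis by blast
  then have "0 < norm b" by (simp add: nonzero_Basis)
  moreover have "0 \<le> K * norm (b - 0)" using assms[of b 0] norm_ge_zero order_trans by blast
  ultimately show ?thesis by (simp add: zero_le_mult_iff)
qed

section \<open>Second moments of compressed vectors\<close>

lemma (in prob_space) integral_norm_power2_le: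
  fixes Z :: "'a \<Rightarrow> 'b::euclidean_space"
  assumes Z: "integrable M Z" and B: "0 \<le> B"
    and var: "(\<integral>\<^sup>+ v. ennreal ((norm (Z v - expectation Z))\<^sup>2) \<partial>M) \<le> ennreal B"
  shows "integrable M (\<lambda>v. (norm (Z v))\<^sup>2)"
    and "(\<integral>v. (norm (Z v))\<^sup>2 \<partial>M) \<le> (norm (expectation Z))\<^sup>2 + B"
proof -
  define e where "e = expectation Z"
  have [measurable]: "Z \<in> borel_measurable M" using Z by auto
  have int_dev: "integrable M (\<lambda>v. (norm (Z v - e))\<^sup>2)"
    using var unfolding e_def[symmetric]
    by (intro integrableI_bounded) (auto simp: le_less_trans[OF _ ennreal_less_top])
  have "ennreal (\<integral>v. (norm (Z v - e))\<^sup>2 \<partial>M) \<le> ennreal B"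
    using var unfolding e_def[symmetric] by (simp add: nn_integral_eq_integral[OF int_dev, symmetric])
  then have dev: "(\<integral>v. (norm (Z v - e))\<^sup>2 \<partial>M) \<le> B" using B by (simp add: ennreal_le_iff)
  \<comment> \<open>the cross term has mean zero\<close>
  have split: "(norm (Z v))\<^sup>2 = (norm e)\<^sup>2 + 2 * (e \<bullet> (Z v - e)) + (norm (Z v - e))\<^sup>2" for v
    by (simp add: power2_norm_eq_inner inner_diff inner_commute)
  have int_centered: "integrable M (\<lambda>v. Z v - e)" using Z by auto
  have mean_zero: "(\<integral>v. Z v - e \<partial>M) = 0" using Z by (simp add: e_def prob_space)
  show "integrable M (\<lambda>v. (norm (Z v))\<^sup>2)"
    unfolding split using int_centered int_dev by auto
  have "(\<integral>v. (norm (Z v))\<^sup>2 \<partial>M)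
      = (norm e)\<^sup>2 + 2 * (e \<bullet> (\<integral>v. Z v - e \<partial>M)) + (\<integral>v. (norm (Z v - e))\<^sup>2 \<partial>M)"
    unfolding split using int_centered int_dev by (simp add: prob_space)
  also have "\<dots> \<le> (norm e)\<^sup>2 + B" using mean_zero dev by simp
  finally show "(\<integral>v. (norm (Z v))\<^sup>2 \<partial>M) \<le> (norm (expectation Z))\<^sup>2 + B"
    unfolding e_def .
qed

lemma (in prob_space) compressor_relaxed_error_moment:
  fixes C :: "'b::euclidean_space \<Rightarrow> 'a \<Rightarrow> 'b"
  assumes C: "compressor_class M C eta om"
    and lam: "0 \<le> lam" "lam \<le> 1" and om: "0 \<le> om"
  shows "integrable M (\<lambda>w. (norm (lam *\<^sub>R C v w - v))\<^sup>2)"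
    and "(\<integral>w. (norm (lam *\<^sub>R C v w - v))\<^sup>2 \<partial>M) \<le> ((1 - lam + lam * eta)\<^sup>2 + lam\<^sup>2 * om) * (norm v)\<^sup>2"
proof -
  define Z where "Z = (\<lambda>w. lam *\<^sub>R C v w - v)"
  have int_C: "integrable M (C v)" and bias: "norm (expectation (C v) - v) \<le> eta * norm v"
    and var: "(\<integral>\<^sup>+ w. ennreal ((norm (C v w - expectation (C v)))\<^sup>2) \<partial>M) \<le> ennreal (om * (norm v)\<^sup>2)"
    using C unfolding compressor_class_def by auto
  have int_Z: "integrable M Z" unfolding Z_def using int_C by auto
  have EZ: "expectation Z = lam *\<^sub>R (expectation (C v) - v) - (1 - lam) *\<^sub>R v"
    unfolding Z_def using int_C by (simp add: prob_space algebra_simps)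
  have dev: "Z w - expectation Z = lam *\<^sub>R (C v w - expectation (C v))" for w
    unfolding EZ by (simp add: Z_def algebra_simps)
  have "(\<integral>\<^sup>+ w. ennreal ((norm (Z w - expectation Z))\<^sup>2) \<partial>M)
      = (\<integral>\<^sup>+ w. ennreal (lam\<^sup>2) * ennreal ((norm (C v w - expectation (C v)))\<^sup>2) \<partial>M)"
    unfolding dev by (simp add: ennreal_mult[symmetric] power_mult_distrib)
  also have "\<dots> = ennreal (lam\<^sup>2) * (\<integral>\<^sup>+ w. ennreal ((norm (C v w - expectation (C v)))\<^sup>2) \<partial>M)"
    using int_C by (intro nn_integral_cmult) auto
  also have "\<dots> \<le> ennreal (lam\<^sup>2) * ennreal (om * (norm v)\<^sup>2)"
    by (rule mult_left_mono[OF var]) simp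
  also have "\<dots> = ennreal (lam\<^sup>2 * om * (norm v)\<^sup>2)"
    using om by (simp add: ennreal_mult[symmetric] mult.assoc)
  finally have var_Z: "(\<integral>\<^sup>+ w. ennreal ((norm (Z w - expectation Z))\<^sup>2) \<partial>M) \<le> ennreal (lam\<^sup>2 * om * (norm v)\<^sup>2)" .
  have "norm (expectation Z) \<le> lam * norm (expectation (C v) - v) + (1 - lam) * norm v"
    unfolding EZ using norm_triangle_ineq4 lam by (metis abs_of_nonneg diff_ge_0_iff_ge norm_scaleR)
  also have "\<dots> \<le> (1 - lam + lam * eta) * norm v"
    using mult_left_mono[OF bias lam(1)] by (simp add: algebra_simps)
  finally have "(norm (expectation Z))\<^sup>2 \<le> (1 - lam + lam * eta)\<^sup>2 * (norm v)\<^sup>2"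
    by (metis norm_ge_zero power_mono power_mult_distrib)
  moreover have "0 \<le> lam\<^sup>2 * om * (norm v)\<^sup>2" using om by simp
  ultimately show "integrable M (\<lambda>w. (norm (lam *\<^sub>R C v w - v))\<^sup>2)"
    and "(\<integral>w. (norm (lam *\<^sub>R C v w - v))\<^sup>2 \<partial>M) \<le> ((1 - lam + lam * eta)\<^sup>2 + lam\<^sup>2 * om) * (norm v)\<^sup>2"
    using integral_norm_power2_le[OF int_Z _ var_Z] unfolding Z_def by (auto simp: algebra_simps)
qed

lemma (in prob_space) compressor_average_error_moment:
  fixes C :: "nat \<Rightarrow> 'b::euclidean_space \<Rightarrow> 'a \<Rightarrow> 'b"
  assumes C: "\<And>i. i < n \<Longrightarrow> compressor_class M (C i) eta om"
    and var: "(\<integral>\<^sup>+ w. ennreal ((norm ((1 / real n) *\<^sub>R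
                 (\<Sum>i<n. C i (v i) w - expectation (C i (v i)))))\<^sup>2) \<partial>M)
               \<le> ennreal (om_av / real n * (\<Sum>i<n. (norm (v i))\<^sup>2))"
    and om_av: "0 \<le> om_av"
  shows "integrable M (\<lambda>w. (norm ((1 / real n) *\<^sub>R (\<Sum>i<n. C i (v i) w - v i)))\<^sup>2)"
    and "(\<integral>w. (norm ((1 / real n) *\<^sub>R (\<Sum>i<n. C i (v i) w - v i)))\<^sup>2 \<partial>M)
           \<le> (eta\<^sup>2 + om_av) * ((1 / real n) * (\<Sum>i<n. (norm (v i))\<^sup>2))"
proof -
  define Z where "Z = (\<lambda>w. (1 / real n) *\<^sub>R (\<Sum>i<n. C i (v i) w - v i))"
  define G where "G = (1 / real n) * (\<Sum>i<n. (norm (v i))\<^sup>2)"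
  have int_C: "\<And>i. i \<in> {..<n} \<Longrightarrow> integrable M (C i (v i))"
    and bias: "\<And>i. i \<in> {..<n} \<Longrightarrow> norm (expectation (C i (v i)) - v i) \<le> eta * norm (v i)"
    using C unfolding compressor_class_def by auto
  have int_Z: "integrable M Z"
    unfolding Z_def using int_C by (intro integrable_scaleR_right Bochner_Integration.integrable_sum) auto
  have EZ: "expectation Z = (1 / real n) *\<^sub>R (\<Sum>i<n. expectation (C i (v i)) - v i)"
    unfolding Z_def using int_C by (simp add: prob_space)
  have dev: "Z w - expectation Z = (1 / real n) *\<^sub>R (\<Sum>i<n. C i (v i) w - expectation (C i (v i)))" for w
    unfolding EZ by (simp add: Z_def sum_subtractf algebra_simps flip: scaleR_diff_right)
  have var_Z: "(\<integral>\<^sup>+ w. ennreal ((norm (Z w - expectation Z))\<^sup>2) \<partial>M) \<le> ennreal (om_av * G)"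
    using var unfolding dev G_def by simp
  have "norm (expectation Z) \<le> (1 / real n) * (\<Sum>i<n. eta * norm (v i))"
  proof -
    have "norm (\<Sum>i<n. expectation (C i (v i)) - v i) \<le> (\<Sum>i<n. norm (expectation (C i (v i)) - v i))"
      by (rule norm_sum)
    also have "\<dots> \<le> (\<Sum>i<n. eta * norm (v i))" using bias by (rule sum_mono)
    finally show ?thesis unfolding EZ by (simp add: divide_right_mono)
  qed
  then have "(norm (expectation Z))\<^sup>2 \<le> eta\<^sup>2 * ((\<Sum>i<n. norm (v i)) / real n)\<^sup>2"
    by (simp add: power_mono sum_distrib_left[symmetric] power_mult_distrib[symmetric])
  also have "\<dots> \<le> eta\<^sup>2 * G"
  proof (cases "n = 0")
    case False
    have "(\<Sum>i<n. norm (v i))\<^sup>2 \<le> real n * (\<Sum>i<n. (norm (v i))\<^sup>2)"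
      using sum_squared_le_sum_of_squares[of "\<lambda>i. norm (v i)" "{..<n}"] by (simp add: mult.commute)
    with False show ?thesis
      unfolding G_def by (intro mult_left_mono) (simp_all add: power_divide field_simps power2_eq_square)
  qed (simp add: G_def)
  finally have bias_Z: "(norm (expectation Z))\<^sup>2 \<le> eta\<^sup>2 * G" .
  have "0 \<le> om_av * G" using om_av by (simp add: G_def sum_nonneg)
  note moments = integral_norm_power2_le[OF int_Z this var_Z]
  from moments(1) show "integrable M (\<lambda>w. (norm ((1 / real n) *\<^sub>R (\<Sum>i<n. C i (v i) w - v i)))\<^sup>2)"
    unfolding Z_def .
  from moments(2) bias_Z have "(\<integral>w. (norm (Z w))\<^sup>2 \<partial>M) \<le> (eta\<^sup>2 + om_av) * G"
    by (simp add: distrib_right)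
  then show "(\<integral>w. (norm ((1 / real n) *\<^sub>R (\<Sum>i<n. C i (v i) w - v i)))\<^sup>2 \<partial>M)
           \<le> (eta\<^sup>2 + om_av) * ((1 / real n) * (\<Sum>i<n. (norm (v i))\<^sup>2))"
    unfolding Z_def G_def .
qed

section \<open>Random recursions driven by independent samples\<close>

lemma (in prob_space) nn_integral_indep_step_le:
  fixes \<xi> :: "nat \<Rightarrow> 'a \<Rightarrow> 'w" and W :: "nat \<Rightarrow> 'w measure"
  assumes indep: "indep_vars W \<xi> UNIV"
    and H: "H \<in> borel_measurable (PiM {..<t} W \<Otimes>\<^sub>M W t)"
    and K: "K \<in> borel_measurable (PiM {..<t} W)"
    and bound: "\<And>x. x \<in> space (PiM {..<t} W) \<Longrightarrow> (\<integral>\<^sup>+ v. H (x, \<xi> t v) \<partial>M) \<le> K x"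
  shows "(\<integral>\<^sup>+ v. H (restrict (\<lambda>k. \<xi> k v) {..<t}, \<xi> t v) \<partial>M)
         \<le> (\<integral>\<^sup>+ v. K (restrict (\<lambda>k. \<xi> k v) {..<t}) \<partial>M)"
proof -
  define X where "X = (\<lambda>v. restrict (\<lambda>k. \<xi> k v) {..<t})"
  define Y where "Y = (\<lambda>v. restrict (\<lambda>k. \<xi> k v) {t})"
  define P where "P = PiM {..<t} W"
  define Q where "Q = PiM {t} W"
  have "indep_var P X Q Y"
    using indep_var_restrict[OF indep, of "{..<t}" "{t}"] by (simp add: X_def Y_def P_def Q_def)
  then have X: "X \<in> measurable M P" and Y: "Y \<in> measurable M Q"
    and joint: "distr M P X \<Otimes>\<^sub>M distr M Q Y = distr M (P \<Otimes>\<^sub>M Q) (\<lambda>v. (X v, Y v))"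
    unfolding indep_var_distribution_eq by auto
  interpret Y_distr: prob_space "distr M Q Y" using Y by (rule prob_space_distr)
  define H' where "H' = (\<lambda>p. H (fst p, snd p t))"
  have "(\<lambda>p. (fst p, snd p t)) \<in> measurable (P \<Otimes>\<^sub>M Q) (P \<Otimes>\<^sub>M W t)"
    unfolding Q_def by measurable
  from measurable_compose[OF this H[folded P_def]]
  have H': "H' \<in> borel_measurable (P \<Otimes>\<^sub>M Q)" by (simp add: H'_def)
  have "(\<integral>\<^sup>+ v. H (X v, \<xi> t v) \<partial>M) = (\<integral>\<^sup>+ p. H' p \<partial>distr M (P \<Otimes>\<^sub>M Q) (\<lambda>v. (X v, Y v)))"
    using X Y H' by (subst nn_integral_distr) (simp_all add: H'_def Y_def)
  also have "\<dots> = (\<integral>\<^sup>+ x. \<integral>\<^sup>+ y. H' (x, y) \<partial>distr M Q Y \<partial>distr M P X)"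
    unfolding joint[symmetric] using H' by (intro Y_distr.nn_integral_fst[symmetric]) (simp add: joint)
  also have "\<dots> \<le> (\<integral>\<^sup>+ x. K x \<partial>distr M P X)"
  proof (rule nn_integral_mono)
    fix x assume "x \<in> space (distr M P X)"
    then have x: "x \<in> space P" by simp
    have "(\<integral>\<^sup>+ y. H' (x, y) \<partial>distr M Q Y) = (\<integral>\<^sup>+ v. H (x, \<xi> t v) \<partial>M)"
      using Y measurable_Pair2[OF H' x] by (subst nn_integral_distr) (simp_all add: H'_def Y_def)
    also have "\<dots> \<le> K x" using bound x by (simp add: P_def)
    finally show "(\<integral>\<^sup>+ y. H' (x, y) \<partial>distr M Q Y) \<le> K x" .
  qed
  also have "\<dots> = (\<integral>\<^sup>+ v. K (X v) \<partial>M)"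
    using X K by (subst nn_integral_distr) (simp_all add: P_def)
  finally show ?thesis unfolding X_def .
qed

lemma (in prob_space) nn_integral_random_recursion_le:
  fixes \<xi> :: "nat \<Rightarrow> 'a \<Rightarrow> 'w" and W :: "nat \<Rightarrow> 'w measure"
    and S :: "(nat \<Rightarrow> 'w) \<Rightarrow> nat \<Rightarrow> 's" and step :: "nat \<Rightarrow> 's \<Rightarrow> 'w \<Rightarrow> 's" and \<Psi> :: "'s \<Rightarrow> real"
  assumes indep: "indep_vars W \<xi> UNIV"
    and S_Suc: "\<And>w t. S w (Suc t) = step t (S w t) (w t)"
    and S_cong: "\<And>w w' t. (\<And>k. k < t \<Longrightarrow> w k = w' k) \<Longrightarrow> S w t = S w' t"
    and \<Psi>_meas: "\<And>t. (\<lambda>w. \<Psi> (S w t)) \<in> borel_measurable (PiM {..<t} W)"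
    and step_meas: "\<And>t. (\<lambda>p. \<Psi> (step t (S (fst p) t) (snd p))) \<in> borel_measurable (PiM {..<t} W \<Otimes>\<^sub>M W t)"
    and contract: "\<And>t w. (\<integral>\<^sup>+ v. ennreal (\<Psi> (step t (S w t) (\<xi> t v))) \<partial>M) \<le> ennreal (\<rho> * \<Psi> (S w t))"
    and \<rho>: "0 \<le> \<rho>"
  shows "(\<integral>\<^sup>+ v. ennreal (\<Psi> (S (\<lambda>k. \<xi> k v) t)) \<partial>M) \<le> ennreal (\<rho> ^ t * \<Psi> (S w 0))"
proof (induction t)
  case 0
  have "S (\<lambda>k. \<xi> k v) 0 = S w 0" for v by (rule S_cong) simp
  then show ?case by (simp add: emeasure_space_1)
next
  case (Suc t)
  define X where "X = (\<lambda>v. restrict (\<lambda>k. \<xi> k v) {..<t})"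
  have S_X: "S (\<lambda>k. \<xi> k v) t = S (X v) t" for v by (rule S_cong) (simp add: X_def)
  have "X \<in> measurable M (PiM {..<t} W)"
    using indep unfolding X_def indep_vars_def by (auto intro!: measurable_restrict)
  from measurable_compose[OF this \<Psi>_meas]
  have \<Psi>_X: "(\<lambda>v. ennreal (\<Psi> (S (X v) t))) \<in> borel_measurable M"
    by (rule measurable_compose[OF _ measurable_ennreal])
  have "(\<integral>\<^sup>+ v. ennreal (\<Psi> (S (\<lambda>k. \<xi> k v) (Suc t))) \<partial>M)
      = (\<integral>\<^sup>+ v. ennreal (\<Psi> (step t (S (X v) t) (\<xi> t v))) \<partial>M)"
    by (simp add: S_Suc S_X)
  also have "\<dots> \<le> (\<integral>\<^sup>+ v. ennreal \<rho> * ennreal (\<Psi> (S (X v) t)) \<partial>M)"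
    unfolding X_def
    using contract \<rho> \<Psi>_meas step_meas
    by (intro nn_integral_indep_step_le[OF indep, where H="\<lambda>p. ennreal (\<Psi> (step t (S (fst p) t) (snd p)))",
          simplified]) (auto simp: ennreal_mult')
  also have "\<dots> = ennreal \<rho> * (\<integral>\<^sup>+ v. ennreal (\<Psi> (S (\<lambda>k. \<xi> k v) t)) \<partial>M)"
    using \<Psi>_X by (simp add: nn_integral_cmult S_X)
  also have "\<dots> \<le> ennreal \<rho> * ennreal (\<rho> ^ t * \<Psi> (S w 0))"
    using Suc.IH by (rule mult_left_mono) simp
  also have "\<dots> = ennreal (\<rho> ^ Suc t * \<Psi> (S w 0))"
    using \<rho> by (simp add: ennreal_mult'[symmetric] mult.assoc)
  finally show ?case .
qed

section \<open>DIANA iterates and their measurability\<close>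

definition diana_step ::
  "nat \<Rightarrow> (nat \<Rightarrow> 'a::real_normed_vector \<Rightarrow> 'a) \<Rightarrow> (nat \<Rightarrow> 'a \<Rightarrow> 'w \<Rightarrow> 'a) \<Rightarrow> real \<Rightarrow> real
   \<Rightarrow> 'a \<times> (nat \<Rightarrow> 'a) \<times> 'a \<Rightarrow> 'w \<Rightarrow> 'a \<times> (nat \<Rightarrow> 'a) \<times> 'a" where
  "diana_step n gf C lam gam st y =
     (let x = fst st; hs = fst (snd st); hb = snd (snd st);
          d = (\<lambda>i. C i (gf i x - hs i) y);
          dbar = (1 / real n) *\<^sub>R (\<Sum>i<n. d i)
      in (x - gam *\<^sub>R (hb + dbar), (\<lambda>i. hs i + lam *\<^sub>R d i), hb + lam *\<^sub>R dbar))"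

lemma diana_step_comp:
  "diana_step n gf (\<lambda>i x v. C i x (Y v)) lam gam st v = diana_step n gf C lam gam st (Y v)"
  by (simp add: diana_step_def)

lemma diana_Suc_step:
  "diana n gf Cop lam gam x0 h0 w (Suc t) = diana_step n gf (Cop t) lam gam (diana n gf Cop lam gam x0 h0 w t) (w t)"
  by (simp add: diana_step_def Let_def split: prod.split)

lemma diana_cong:
  "(\<And>k. k < t \<Longrightarrow> w k = w' k) \<Longrightarrow> diana n gf Cop lam gam x0 h0 w t = diana n gf Cop lam gam x0 h0 w' t"
  by (induction t) (simp_all add: diana_Suc_step)

lemma diana_shift_mean:
  "snd (snd (diana n gf Cop lam gam x0 h0 w t)) = (1 / real n) *\<^sub>R (\<Sum>i<n. fst (snd (diana n gf Cop lam gam x0 h0 w t)) i)"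
  by (induction t) (simp_all del: diana.simps(2) add: diana_Suc_step diana_step_def Let_def sum.distrib
      scaleR_add_right flip: scaleR_sum_right)

lemma borel_measurable_lipschitz_bound:
  fixes g :: "'a::euclidean_space \<Rightarrow> 'b::euclidean_space"
  assumes "\<And>x y. norm (g x - g y) \<le> K * norm (x - y)"
  shows "g \<in> borel_measurable borel"
proof -
  have "K-lipschitz_on UNIV g"
    using assms lipschitz_bound_nonneg[OF assms] by (intro lipschitz_onI) (simp_all add: dist_norm)
  then show ?thesis by (intro borel_measurable_continuous_onI lipschitz_on_continuous_on)
qed

lemma borel_measurable_has_derivative:
  assumes "\<And>x. (F has_derivative F' x) (at x)"
  shows "F \<in> borel_measurable borel"
  using assms by (intro borel_measurable_continuous_onI continuous_at_imp_continuous_on ballI has_derivative_continuous)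

text \<open>The state space \<open>'a \<times> (nat \<Rightarrow> 'a) \<times> 'a\<close> carries no convenient \<open>\<sigma>\<close>-algebra, so
  measurability of a random DIANA state is stated componentwise, for the first \<open>n\<close> control
  variates only.\<close>

definition diana_state_measurable :: "'z measure \<Rightarrow> nat \<Rightarrow> ('z \<Rightarrow> 'a::euclidean_space \<times> (nat \<Rightarrow> 'a) \<times> 'a) \<Rightarrow> bool" where
  "diana_state_measurable N n S \<longleftrightarrow>
     (\<lambda>z. fst (S z)) \<in> borel_measurable N \<and> (\<forall>i<n. (\<lambda>z. fst (snd (S z)) i) \<in> borel_measurable N)
     \<and> (\<lambda>z. snd (snd (S z))) \<in> borel_measurable N"

lemma diana_state_measurable_comp:
  "diana_state_measurable N n S \<Longrightarrow> g \<in> measurable N' N \<Longrightarrow> diana_state_measurable N' n (\<lambda>z. S (g z))"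
  unfolding diana_state_measurable_def by (auto intro: measurable_compose)

lemma diana_state_measurable_step:
  assumes S: "diana_state_measurable N n S" and Y: "Y \<in> measurable N Wt"
    and gf: "\<And>i. i < n \<Longrightarrow> gf i \<in> borel_measurable borel"
    and C: "\<And>i. i < n \<Longrightarrow> (\<lambda>(x, w). C i x w) \<in> borel_measurable (borel \<Otimes>\<^sub>M Wt)"
  shows "diana_state_measurable N n (\<lambda>z. diana_step n gf C lam gam (S z) (Y z))"
proof -
  have d: "(\<lambda>z. C i (gf i (fst (S z)) - fst (snd (S z)) i) (Y z)) \<in> borel_measurable N" if i: "i < n" for i
  proof -
    have "(\<lambda>z. (gf i (fst (S z)) - fst (snd (S z)) i, Y z)) \<in> measurable N (borel \<Otimes>\<^sub>M Wt)"
      using S i measurable_compose[OF _ gf[OF i]] Y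
      by (intro measurable_Pair borel_measurable_diff) (auto simp: diana_state_measurable_def)
    from measurable_compose[OF this C[OF i]] show ?thesis by simp
  qed
  then have "(\<lambda>z. \<Sum>i<n. C i (gf i (fst (S z)) - fst (snd (S z)) i) (Y z)) \<in> borel_measurable N"
    by (intro borel_measurable_sum) auto
  with S d show ?thesis
    unfolding diana_state_measurable_def diana_step_def Let_def fst_conv snd_conv by auto
qed

lemma diana_state_measurable_iterate:
  assumes gf: "\<And>i. i < n \<Longrightarrow> gf i \<in> borel_measurable borel"
    and Cop: "\<And>t i. i < n \<Longrightarrow> (\<lambda>(x, w). Cop t i x w) \<in> borel_measurable (borel \<Otimes>\<^sub>M W t)"
  shows "t \<le> T \<Longrightarrow> diana_state_measurable (PiM {..<T} W) n (\<lambda>w. diana n gf Cop lam gam x0 h0 w t)"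
proof (induction t)
  case 0
  then show ?case by (simp add: diana_state_measurable_def)
next
  case (Suc t)
  have "(\<lambda>w. w t) \<in> measurable (PiM {..<T} W) (W t)"
    using Suc.prems by (intro measurable_component_singleton) simp
  with Suc show ?case
    unfolding diana_Suc_step by (intro diana_state_measurable_step[where Wt="W t"] gf Cop) simp_all
qed

lemma borel_measurable_lyap:
  assumes S: "diana_state_measurable N n S"
    and F: "F \<in> borel_measurable borel" and gf: "\<And>i. i < n \<Longrightarrow> gf i \<in> borel_measurable borel"
  shows "(\<lambda>z. lyap n F gf fstar gam \<theta> (S z)) \<in> borel_measurable N"
proof -
  have "(\<lambda>z. gf i (fst (S z))) \<in> borel_measurable N" if "i < n" for i
    using S measurable_compose[OF _ gf[OF that]] by (auto simp: diana_state_measurable_def)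
  moreover have "(\<lambda>z. F (fst (S z))) \<in> borel_measurable N"
    using S measurable_compose[OF _ F] by (auto simp: diana_state_measurable_def)
  ultimately show ?thesis
    using S unfolding lyap_def diana_state_measurable_def
    by (intro borel_measurable_add borel_measurable_diff borel_measurable_times borel_measurable_sum
        borel_measurable_power borel_measurable_norm) auto
qed

lemma (in prob_space) nn_integral_lyap_diana_le:
  fixes \<xi> :: "nat \<Rightarrow> 'a \<Rightarrow> 'w" and gf :: "nat \<Rightarrow> 'b::euclidean_space \<Rightarrow> 'b"
    and Cop :: "nat \<Rightarrow> nat \<Rightarrow> 'b \<Rightarrow> 'w \<Rightarrow> 'b"
  assumes indep: "indep_vars W \<xi> UNIV"
    and gf: "\<And>i. i < n \<Longrightarrow> gf i \<in> borel_measurable borel"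
    and Cop: "\<And>t i. i < n \<Longrightarrow> (\<lambda>(x, w). Cop t i x w) \<in> borel_measurable (borel \<Otimes>\<^sub>M W t)"
    and F: "F \<in> borel_measurable borel"
    and \<rho>: "0 \<le> \<rho>"
    and contract: "\<And>t w. (\<integral>\<^sup>+ v. ennreal (lyap n F gf fstar gam \<theta>
                       (diana_step n gf (Cop t) lam gam (diana n gf Cop lam gam x0 h0 w t) (\<xi> t v))) \<partial>M)
                   \<le> ennreal (\<rho> * lyap n F gf fstar gam \<theta> (diana n gf Cop lam gam x0 h0 w t))"
  shows "(\<integral>\<^sup>+ v. ennreal (lyap n F gf fstar gam \<theta> (diana n gf Cop lam gam x0 h0 (\<lambda>k. \<xi> k v) t)) \<partial>M)
         \<le> ennreal (\<rho> ^ t * lyap n F gf fstar gam \<theta> (x0, h0, (1 / real n) *\<^sub>R (\<Sum>i<n. h0 i)))"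
proof -
  define S where "S = diana n gf Cop lam gam x0 h0"
  define \<Psi> where "\<Psi> = lyap n F gf fstar gam \<theta>"
  have state: "diana_state_measurable (PiM {..<t} W) n (\<lambda>w. S w t)" for t
    unfolding S_def by (rule diana_state_measurable_iterate) (use gf Cop in auto)
  note \<Psi>_meas = borel_measurable_lyap[OF _ F gf]
  have "(\<integral>\<^sup>+ v. ennreal (\<Psi> (S (\<lambda>k. \<xi> k v) t)) \<partial>M) \<le> ennreal (\<rho> ^ t * \<Psi> (S w 0))" for w
  proof (rule nn_integral_random_recursion_le[where S=S and step="\<lambda>t. diana_step n gf (Cop t) lam gam",
        OF indep _ _ _ _ contract[folded S_def \<Psi>_def] \<rho>])
    show "(\<lambda>w. \<Psi> (S w t)) \<in> borel_measurable (PiM {..<t} W)" for t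
      unfolding \<Psi>_def by (rule \<Psi>_meas[OF state])
    show "(\<lambda>p. \<Psi> (diana_step n gf (Cop t) lam gam (S (fst p) t) (snd p)))
        \<in> borel_measurable (PiM {..<t} W \<Otimes>\<^sub>M W t)" for t
      unfolding \<Psi>_def by (rule \<Psi>_meas, rule diana_state_measurable_step[where Wt="W t"])
        (use diana_state_measurable_comp[OF state measurable_fst] gf Cop in auto)
  qed (unfold S_def, fact diana_Suc_step, fact diana_cong)
  then show ?thesis by (simp add: S_def \<Psi>_def)
qed

section \<open>The constants and the rate\<close>

lemma s_star_pos: "0 < r \<Longrightarrow> r < 1 \<Longrightarrow> 0 < s_star r"
  unfolding s_star_def by (simp add: real_less_rsqrt field_simps)

lemma one_plus_s_star_power2: "0 < r \<Longrightarrow> (1 + s_star r)\<^sup>2 * r = (r + 1) / 2"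
  unfolding s_star_def by (simp add: field_simps)

lemma theta_star_pos: "0 < r \<Longrightarrow> r < 1 \<Longrightarrow> 0 < r_av \<Longrightarrow> 0 < theta_star r r_av"
  unfolding theta_star_def using s_star_pos[of r] by simp

lemma theta_star_mult: "0 < r_av \<Longrightarrow> theta_star r r_av * r_av = s_star r * (1 + s_star r) * r"
  unfolding theta_star_def by simp

lemma diana_stepsize_condition:
  assumes r: "0 < r" "r < 1" and r_av: "0 < r_av" and gam: "0 < gam" and L: "0 \<le> L" and Lt2: "0 \<le> Lt2"
    and le: "gam \<le> 1 / (L + sqrt Lt2 * sqrt (r_av / r) * (1 / s_star r))"
  shows "gam * L + gam\<^sup>2 * (1 + 1 / s_star r) / theta_star r r_av * Lt2 \<le> 1"
proof -
  define s where "s = s_star r"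
  have s: "0 < s" using s_star_pos[OF r] by (simp add: s_def)
  have "(gam * (sqrt Lt2 * sqrt (r_av / r) * (1 / s)))\<^sup>2 = gam\<^sup>2 * (1 + 1 / s) / theta_star r r_av * Lt2"
    using s r r_av Lt2 unfolding theta_star_def s_def[symmetric]
    by (simp add: power_mult_distrib power_divide divide_simps power2_eq_square) (simp add: algebra_simps)
  moreover have "gam * L + (gam * (sqrt Lt2 * sqrt (r_av / r) * (1 / s)))\<^sup>2 \<le> 1"
    using le s r r_av Lt2 by (intro stepsize_le_inverse_sum[OF gam L]) (simp_all add: s_def)
  ultimately show ?thesis by (simp add: s_def)
qed

lemma diana_rate_bound:
  fixes gap g2 G gam mu \<theta> s r r_av \<rho> :: real
  assumes PL: "2 * mu * gap \<le> g2" and gap: "0 \<le> gap" and gam: "0 \<le> gam" and \<theta>: "0 < \<theta>" and G: "0 \<le> G"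
    and rel: "\<theta> * r_av = s * (1 + s) * r"
    and \<rho>1: "1 - gam * mu \<le> \<rho>" and \<rho>2: "(1 + s)\<^sup>2 * r \<le> \<rho>"
  shows "gap - gam / 2 * g2 + gam / (2 * \<theta>) * (\<theta> * r_av + (1 + s) * r) * G \<le> \<rho> * (gap + gam / (2 * \<theta>) * G)"
proof -
  have "gap - gam / 2 * g2 \<le> (1 - gam * mu) * gap"
    using mult_left_mono[OF PL gam] by (simp add: algebra_simps)
  also have "\<dots> \<le> \<rho> * gap" using \<rho>1 gap by (rule mult_right_mono)
  finally have "gap - gam / 2 * g2 \<le> \<rho> * gap" .
  moreover have "\<theta> * r_av + (1 + s) * r = (1 + s)\<^sup>2 * r"
    unfolding rel by (simp add: power2_eq_square algebra_simps)
  moreover have "gam / (2 * \<theta>) * ((1 + s)\<^sup>2 * r) * G \<le> gam / (2 * \<theta>) * \<rho> * G"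
    using \<rho>2 gam \<theta> G by (intro mult_right_mono mult_left_mono) auto
  ultimately show ?thesis by (simp add: algebra_simps)
qed

section \<open>Expected decrease of the Lyapunov function in one step\<close>

lemma lyap_nonneg:
  assumes "\<And>y. fstar \<le> f y" and "0 \<le> gam" and "0 \<le> \<theta>"
  shows "0 \<le> lyap n f gf fstar gam \<theta> st"
  using assms unfolding lyap_def by (intro add_nonneg_nonneg mult_nonneg_nonneg sum_nonneg) auto

lemma lyap_diana_step_le:
  fixes n :: nat and fi :: "nat \<Rightarrow> 'a::euclidean_space \<Rightarrow> real" and gf :: "nat \<Rightarrow> 'a \<Rightarrow> 'a" and Li :: "nat \<Rightarrow> real"
  defines "f \<equiv> (\<lambda>x. (1 / real n) * (\<Sum>i<n. fi i x))"
    and "gradf \<equiv> (\<lambda>x. (1 / real n) *\<^sub>R (\<Sum>i<n. gf i x))"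
    and "Lt2 \<equiv> (1 / real n) * (\<Sum>i<n. (Li i)\<^sup>2)"
  assumes grad: "\<And>i x. i < n \<Longrightarrow> (fi i has_derivative (\<lambda>h. gf i x \<bullet> h)) (at x)"
    and smooth_i: "\<And>i x y. i < n \<Longrightarrow> norm (gf i x - gf i y) \<le> Li i * norm (x - y)"
    and smooth: "\<And>x y. norm (gradf x - gradf y) \<le> L * norm (x - y)"
    and hb: "hb = (1 / real n) *\<^sub>R (\<Sum>i<n. hs i)"
    and s: "s > 0" and \<theta>: "\<theta> > 0" and gam: "gam > 0"
    and stepsize: "gam * L + gam\<^sup>2 * (1 + 1 / s) / \<theta> * Lt2 \<le> 1"
  shows "lyap n f gf fstar gam \<theta> (diana_step n gf C lam gam (x, hs, hb) y)
     \<le> f x - fstar - gam / 2 * (norm (gradf x))\<^sup>2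
       + gam / 2 * (norm ((1 / real n) *\<^sub>R (\<Sum>i<n. C i (gf i x - hs i) y - (gf i x - hs i))))\<^sup>2
       + gam * (1 + s) / (2 * \<theta>)
           * ((1 / real n) * (\<Sum>i<n. (norm (lam *\<^sub>R C i (gf i x - hs i) y - (gf i x - hs i)))\<^sup>2))"
proof -
  define v where "v = (\<lambda>i. gf i x - hs i)"
  define d where "d = (\<lambda>i. C i (v i) y)"
  define g where "g = hb + (1 / real n) *\<^sub>R (\<Sum>i<n. d i)"
  define x' where "x' = x - gam *\<^sub>R g"
  define N where "N = (norm g)\<^sup>2"
  define Q where "Q = (1 / real n) * (\<Sum>i<n. (norm (lam *\<^sub>R d i - v i))\<^sup>2)"
  define E where "E = (norm ((1 / real n) *\<^sub>R (\<Sum>i<n. d i - v i)))\<^sup>2"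
  define D where "D = (1 / real n) * (\<Sum>i<n. (norm (gf i x' - (hs i + lam *\<^sub>R d i)))\<^sup>2)"
  have step: "diana_step n gf C lam gam (x, hs, hb) y
      = (x', (\<lambda>i. hs i + lam *\<^sub>R d i), hb + lam *\<^sub>R ((1 / real n) *\<^sub>R (\<Sum>i<n. d i)))"
    by (simp add: diana_step_def Let_def d_def v_def x'_def g_def)
  have f_deriv: "(f has_derivative (\<lambda>h. gradf z \<bullet> h)) (at z)" for z
    unfolding f_def gradf_def using grad by (rule has_derivative_average)
  have "g - gradf x = (1 / real n) *\<^sub>R (\<Sum>i<n. d i - v i)"
    by (simp add: g_def hb gradf_def v_def sum_subtractf sum.distrib scaleR_diff_right algebra_simps)
  then have descent: "f x' \<le> f x - gam / 2 * (norm (gradf x))\<^sup>2 - gam / 2 * (1 - gam * L) * N + gam / 2 * E"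
    using gradient_step_le[OF f_deriv smooth, of x gam g] unfolding x'_def N_def E_def by simp
  have drift_i: "(norm (gf i x' - (hs i + lam *\<^sub>R d i)))\<^sup>2
      \<le> (1 + s) * (norm (lam *\<^sub>R d i - v i))\<^sup>2 + (1 + 1 / s) * ((Li i)\<^sup>2 * (gam\<^sup>2 * N))"
    if "i < n" for i
    using norm_control_variate_update_le[where x'=x' and x=x and h="hs i" and d="lam *\<^sub>R d i",
        OF s smooth_i[OF that]] gam
    by (simp add: v_def x'_def N_def power_mult_distrib)
  have "D \<le> (1 / real n) * (\<Sum>i<n. (1 + s) * (norm (lam *\<^sub>R d i - v i))\<^sup>2 + (1 + 1 / s) * ((Li i)\<^sup>2 * (gam\<^sup>2 * N)))"
    unfolding D_def using drift_i by (intro mult_left_mono sum_mono) auto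
  also have "\<dots> = (1 / real n) * ((1 + s) * (\<Sum>i<n. (norm (lam *\<^sub>R d i - v i))\<^sup>2)
                        + (1 + 1 / s) * (gam\<^sup>2 * N) * (\<Sum>i<n. (Li i)\<^sup>2))"
    by (simp add: sum.distrib sum_distrib_left sum_distrib_right mult_ac)
  also have "\<dots> = (1 + s) * Q + (1 + 1 / s) * Lt2 * gam\<^sup>2 * N"
    by (simp add: Q_def Lt2_def algebra_simps add_divide_distrib)
  finally have drift: "D \<le> (1 + s) * Q + (1 + 1 / s) * Lt2 * gam\<^sup>2 * N" .
  have "lyap n f gf fstar gam \<theta> (diana_step n gf C lam gam (x, hs, hb) y) = f x' - fstar + gam / (2 * \<theta>) * D"
    by (simp add: step lyap_def D_def)
  also have "\<dots> \<le> f x' - fstar + gam / (2 * \<theta>) * ((1 + s) * Q + (1 + 1 / s) * Lt2 * gam\<^sup>2 * N)"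
    using drift gam \<theta> by (intro add_left_mono mult_left_mono) auto
  also have "\<dots> = f x' - fstar + gam * (1 + s) / (2 * \<theta>) * Q + gam / 2 * N * (gam\<^sup>2 * (1 + 1 / s) / \<theta> * Lt2)"
    using \<theta> by (simp add: field_simps)
  also have "\<dots> \<le> f x - fstar - gam / 2 * (norm (gradf x))\<^sup>2 + gam / 2 * E + gam * (1 + s) / (2 * \<theta>) * Q
                   + gam / 2 * N * (gam * L + gam\<^sup>2 * (1 + 1 / s) / \<theta> * Lt2 - 1)"
    using descent by (simp add: algebra_simps diff_divide_distrib add_divide_distrib)
  also have "\<dots> \<le> f x - fstar - gam / 2 * (norm (gradf x))\<^sup>2 + gam / 2 * E + gam * (1 + s) / (2 * \<theta>) * Q"
    using stepsize gam by (simp add: N_def mult_nonneg_nonpos)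
  finally show ?thesis unfolding E_def Q_def d_def v_def .
qed

lemma (in prob_space) nn_integral_lyap_diana_step_le:
  fixes n :: nat and fi :: "nat \<Rightarrow> 'b::euclidean_space \<Rightarrow> real" and gf :: "nat \<Rightarrow> 'b \<Rightarrow> 'b"
    and Li :: "nat \<Rightarrow> real" and C :: "nat \<Rightarrow> 'b \<Rightarrow> 'a \<Rightarrow> 'b" and lam eta om om_av :: real
  defines "f \<equiv> (\<lambda>x. (1 / real n) * (\<Sum>i<n. fi i x))"
    and "gradf \<equiv> (\<lambda>x. (1 / real n) *\<^sub>R (\<Sum>i<n. gf i x))"
    and "Lt2 \<equiv> (1 / real n) * (\<Sum>i<n. (Li i)\<^sup>2)"
    and "r \<equiv> (1 - lam + lam * eta)\<^sup>2 + lam\<^sup>2 * om"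
    and "r_av \<equiv> eta\<^sup>2 + om_av"
  assumes grad: "\<And>i x. i < n \<Longrightarrow> (fi i has_derivative (\<lambda>h. gf i x \<bullet> h)) (at x)"
    and smooth_i: "\<And>i x y. i < n \<Longrightarrow> norm (gf i x - gf i y) \<le> Li i * norm (x - y)"
    and smooth: "\<And>x y. norm (gradf x - gradf y) \<le> L * norm (x - y)"
    and fstar: "\<And>y. fstar \<le> f y"
    and hb: "hb = (1 / real n) *\<^sub>R (\<Sum>i<n. hs i)"
    and s: "s > 0" and \<theta>: "\<theta> > 0" and gam: "gam > 0"
    and stepsize: "gam * L + gam\<^sup>2 * (1 + 1 / s) / \<theta> * Lt2 \<le> 1"
    and C: "\<And>i. i < n \<Longrightarrow> compressor_class M (C i) eta om"
    and var: "(\<integral>\<^sup>+ w. ennreal ((norm ((1 / real n) *\<^sub>R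
                 (\<Sum>i<n. C i (gf i x - hs i) w - expectation (C i (gf i x - hs i)))))\<^sup>2) \<partial>M)
               \<le> ennreal (om_av / real n * (\<Sum>i<n. (norm (gf i x - hs i))\<^sup>2))"
    and om: "0 \<le> om" and om_av: "0 \<le> om_av"
    and lam: "0 \<le> lam" "lam \<le> 1"
    and PL: "2 * mu * (f x - fstar) \<le> (norm (gradf x))\<^sup>2"
    and rel: "\<theta> * r_av = s * (1 + s) * r"
    and \<rho>: "1 - gam * mu \<le> \<rho>" "(1 + s)\<^sup>2 * r \<le> \<rho>"
  shows "(\<integral>\<^sup>+ w. ennreal (lyap n f gf fstar gam \<theta> (diana_step n gf C lam gam (x, hs, hb) w)) \<partial>M)
         \<le> ennreal (\<rho> * lyap n f gf fstar gam \<theta> (x, hs, hb))"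
proof -
  define v where "v = (\<lambda>i. gf i x - hs i)"
  define G where "G = (1 / real n) * (\<Sum>i<n. (norm (v i))\<^sup>2)"
  define A where "A = f x - fstar - gam / 2 * (norm (gradf x))\<^sup>2"
  define c where "c = gam * (1 + s) / (2 * \<theta>)"
  define E where "E = (\<lambda>w. (norm ((1 / real n) *\<^sub>R (\<Sum>i<n. C i (v i) w - v i)))\<^sup>2)"
  define Q where "Q = (\<lambda>i w. (norm (lam *\<^sub>R C i (v i) w - v i))\<^sup>2)"
  define B where "B = (\<lambda>w. A + gam / 2 * E w + c * ((1 / real n) * (\<Sum>i<n. Q i w)))"
  have E_moment: "integrable M E" "(\<integral>w. E w \<partial>M) \<le> r_av * G"
    using compressor_average_error_moment[OF C, where v=v and om_av=om_av] var om_av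
    unfolding E_def G_def r_av_def v_def by auto
  have Q_moment: "integrable M (Q i)" "(\<integral>w. Q i w \<partial>M) \<le> r * (norm (v i))\<^sup>2" if "i < n" for i
    using compressor_relaxed_error_moment[OF C[OF that] lam om, of "v i"] unfolding Q_def r_def by auto
  have lyap_le_B: "lyap n f gf fstar gam \<theta> (diana_step n gf C lam gam (x, hs, hb) w) \<le> B w" for w
    using lyap_diana_step_le[where n=n and fi=fi and gf=gf and Li=Li and fstar=fstar and C=C and lam=lam
        and x=x and y=w, OF grad smooth_i smooth[unfolded gradf_def] hb s \<theta> gam stepsize[unfolded Lt2_def]]
    unfolding B_def A_def E_def Q_def c_def v_def f_def gradf_def .
  have B_nonneg: "0 \<le> B w" for w
  proof -
    have "0 \<le> lyap n f gf fstar gam \<theta> (diana_step n gf C lam gam (x, hs, hb) w)"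
      by (rule lyap_nonneg) (use fstar gam \<theta> in auto)
    then show ?thesis using lyap_le_B[of w] by linarith
  qed
  have int_Q: "integrable M (\<lambda>w. \<Sum>i<n. Q i w)" using Q_moment(1) by auto
  have int_B: "integrable M B" unfolding B_def using E_moment(1) int_Q by auto
  have "(\<Sum>i<n. \<integral>w. Q i w \<partial>M) \<le> (\<Sum>i<n. r * (norm (v i))\<^sup>2)"
    using Q_moment(2) by (intro sum_mono) simp
  then have Q_bound: "(1 / real n) * (\<integral>w. (\<Sum>i<n. Q i w) \<partial>M) \<le> r * G"
    using Q_moment(1) by (simp add: G_def sum_distrib_left[symmetric] divide_right_mono)
  have "(\<integral>w. B w \<partial>M) = A + gam / 2 * (\<integral>w. E w \<partial>M) + c * ((1 / real n) * (\<integral>w. (\<Sum>i<n. Q i w) \<partial>M))"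
    unfolding B_def using E_moment(1) int_Q by (simp add: prob_space)
  also have "\<dots> \<le> A + gam / 2 * (r_av * G) + c * (r * G)"
    using E_moment(2) Q_bound gam s \<theta> unfolding c_def
    by (intro add_mono add_left_mono mult_left_mono) auto
  also have "\<dots> = A + gam / (2 * \<theta>) * (\<theta> * r_av + (1 + s) * r) * G"
    using \<theta> by (simp add: c_def field_simps)
  finally have int_B_le: "(\<integral>w. B w \<partial>M) \<le> \<dots>" .
  have "(\<integral>\<^sup>+ w. ennreal (lyap n f gf fstar gam \<theta> (diana_step n gf C lam gam (x, hs, hb) w)) \<partial>M)
      \<le> (\<integral>\<^sup>+ w. ennreal (B w) \<partial>M)"
    using lyap_le_B by (intro nn_integral_mono ennreal_leI)
  also have "\<dots> = ennreal (\<integral>w. B w \<partial>M)"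
    using int_B B_nonneg by (intro nn_integral_eq_integral) auto
  also have "\<dots> \<le> ennreal (A + gam / (2 * \<theta>) * (\<theta> * r_av + (1 + s) * r) * G)"
    using int_B_le by (rule ennreal_leI)
  also have "\<dots> \<le> ennreal (\<rho> * lyap n f gf fstar gam \<theta> (x, hs, hb))"
    unfolding A_def G_def v_def lyap_def fst_conv snd_conv
    by (intro ennreal_leI diana_rate_bound[OF PL _ _ \<theta> _ rel \<rho>]) (use fstar gam in \<open>auto simp: sum_nonneg\<close>)
  finally show ?thesis .
qed

theorem theorem4:
  fixes n :: nat
    and fi :: "nat \<Rightarrow> 'a::euclidean_space \<Rightarrow> real"
    and gf :: "nat \<Rightarrow> 'a \<Rightarrow> 'a"
    and Li :: "nat \<Rightarrow> real"
    and L mu eta om om_av lam gam :: real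
    and xstar x0 :: 'a
    and h0 :: "nat \<Rightarrow> 'a"
    and M :: "'m measure"
    and W :: "nat \<Rightarrow> 'w measure"
    and \<xi> :: "nat \<Rightarrow> 'm \<Rightarrow> 'w"
    and Cop :: "nat \<Rightarrow> nat \<Rightarrow> 'a \<Rightarrow> 'w \<Rightarrow> 'a"
  defines "f \<equiv> (\<lambda>x. (1 / real n) * (\<Sum>i<n. fi i x))"
    and "gradf \<equiv> (\<lambda>x. (1 / real n) *\<^sub>R (\<Sum>i<n. gf i x))"
    and "Ltil \<equiv> sqrt ((1 / real n) * (\<Sum>i<n. (Li i)\<^sup>2))"
    and "r \<equiv> (1 - lam + lam * eta)\<^sup>2 + lam\<^sup>2 * om"
    and "r_av \<equiv> eta\<^sup>2 + om_av"
  assumes n_pos: "n \<ge> 1"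
    and convex: "\<And>i. i < n \<Longrightarrow> convex_on UNIV (fi i)"
    and grad: "\<And>i x. i < n \<Longrightarrow> (fi i has_derivative (\<lambda>h. gf i x \<bullet> h)) (at x)"
    and smooth_i: "\<And>i x y. i < n \<Longrightarrow> norm (gf i x - gf i y) \<le> Li i * norm (x - y)"
    and smooth: "\<And>x y. norm (gradf x - gradf y) \<le> L * norm (x - y)"
    and L_le: "L \<le> Ltil"
    and minimizer: "\<And>x. f xstar \<le> f x"
    and mu_pos: "mu > 0"
    and PL: "\<And>x. (norm (gradf x))\<^sup>2 \<ge> 2 * mu * (f x - f xstar)"
    and eta: "0 \<le> eta" "eta < 1"
    and om: "0 \<le> om"
    and om_av: "0 \<le> om_av" "om_av \<le> om"
    and prob: "prob_space M"
    and xi_meas: "\<And>t. \<xi> t \<in> measurable M (W t)"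
    and indep: "prob_space.indep_vars M W \<xi> UNIV"
    and Cop_meas: "\<And>t i. i < n \<Longrightarrow>
                     (\<lambda>(x, w). Cop t i x w) \<in> borel_measurable (borel \<Otimes>\<^sub>M W t)"
    and Cop_class: "\<And>t i. i < n \<Longrightarrow>
                     compressor_class M (\<lambda>x v. Cop t i x (\<xi> t v)) eta om"
    and Cop_av: "\<And>t (xs :: nat \<Rightarrow> 'a).
        (\<integral>\<^sup>+ v. ennreal ((norm ((1 / real n) *\<^sub>R
             (\<Sum>i<n. Cop t i (xs i) (\<xi> t v) - (\<integral>u. Cop t i (xs i) (\<xi> t u) \<partial>M))))\<^sup>2) \<partial>M)
          \<le> ennreal (om_av / real n * (\<Sum>i<n. (norm (xs i))\<^sup>2))"
    and lam: "0 < lam" "lam \<le> 1"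
    and r_pos: "r > 0"
    and r_av_pos: "r_av > 0"
    and r_lt1: "r < 1"
    and gam_pos: "0 < gam"
    and gam_le: "gam \<le> 1 / (L + Ltil * sqrt (r_av / r) * (1 / s_star r))"
  shows "\<forall>t. (\<integral>\<^sup>+ v. ennreal (lyap n f gf (f xstar) gam (theta_star r r_av)
                      (diana n gf Cop lam gam x0 h0 (\<lambda>k. \<xi> k v) t)) \<partial>M)
             \<le> ennreal ((max (1 - gam * mu) ((r + 1) / 2)) ^ t *
                  lyap n f gf (f xstar) gam (theta_star r r_av)
                    (x0, h0, (1 / real n) *\<^sub>R (\<Sum>i<n. h0 i)))"
proof -
  interpret prob_space M by (rule prob)
  define Lt2 where "Lt2 = (1 / real n) * (\<Sum>i<n. (Li i)\<^sup>2)"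
  define s where "s = s_star r"
  define \<theta> where "\<theta> = theta_star r r_av"
  define \<rho> where "\<rho> = max (1 - gam * mu) ((r + 1) / 2)"
  have Lt2: "0 \<le> Lt2" and Ltil: "Ltil = sqrt Lt2" by (simp_all add: Lt2_def Ltil_def sum_nonneg)
  have s: "0 < s" and \<theta>: "0 < \<theta>" and rel: "\<theta> * r_av = s * (1 + s) * r"
    using s_star_pos theta_star_pos theta_star_mult r_pos r_lt1 r_av_pos by (simp_all add: s_def \<theta>_def)
  have stepsize: "gam * L + gam\<^sup>2 * (1 + 1 / s) / \<theta> * Lt2 \<le> 1"
    using diana_stepsize_condition[OF r_pos r_lt1 r_av_pos gam_pos lipschitz_bound_nonneg[OF smooth] Lt2]
      gam_le unfolding Ltil s_def \<theta>_def by simp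
  have \<rho>: "0 \<le> \<rho>" "1 - gam * mu \<le> \<rho>" "(1 + s)\<^sup>2 * r \<le> \<rho>"
    using one_plus_s_star_power2[OF r_pos] r_pos by (auto simp: \<rho>_def s_def le_max_iff_disj)
  have contract: "(\<integral>\<^sup>+ v. ennreal (lyap n f gf (f xstar) gam \<theta>
        (diana_step n gf (Cop t) lam gam (diana n gf Cop lam gam x0 h0 w t) (\<xi> t v))) \<partial>M)
      \<le> ennreal (\<rho> * lyap n f gf (f xstar) gam \<theta> (diana n gf Cop lam gam x0 h0 w t))" for t w
  proof -
    obtain x hs hb where st: "diana n gf Cop lam gam x0 h0 w t = (x, hs, hb)" by (metis prod.exhaust)
    then have "hb = (1 / real n) *\<^sub>R (\<Sum>i<n. hs i)" by (metis diana_shift_mean fst_conv snd_conv)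
    from nn_integral_lyap_diana_step_le[where n=n and fi=fi and gf=gf and Li=Li and x=x and hs=hs
        and C="\<lambda>i z v. Cop t i z (\<xi> t v)" and fstar="(1 / real n) * (\<Sum>i<n. fi i xstar)",
        OF grad smooth_i smooth[unfolded gradf_def] minimizer[unfolded f_def] this s \<theta> gam_pos
        stepsize[unfolded Lt2_def] Cop_class Cop_av om om_av(1) order_less_imp_le[OF lam(1)] lam(2)
        PL[unfolded f_def gradf_def] rel[unfolded r_def r_av_def] \<rho>(2,3)[unfolded r_def]]
    show ?thesis unfolding st diana_step_comp f_def by simp
  qed
  have "f \<in> borel_measurable borel"
    unfolding f_def by (rule borel_measurable_has_derivative, rule has_derivative_average, erule grad)
  moreover have "gf i \<in> borel_measurable borel" if "i < n" for i
    using smooth_i[OF that] by (rule borel_measurable_lipschitz_bound)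
  ultimately show ?thesis
    using nn_integral_lyap_diana_le[OF indep _ Cop_meas _ \<rho>(1) contract] unfolding \<rho>_def \<theta>_def by blast
qed

end
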